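(* Let \[ W(\eta,\omega_G)=\tfrac12(\omega_G-\bar\omega_G)^TM(\omega_G-\bar\omega_G)+\mathbf{1}^T\Gamma\cos(\eta)-\mathbf{1}^T\Gamma\cos(\bar\eta)-(\Gamma\sin(\bar\eta))^T(\eta-\bar\eta). \] Then the time derivative of $W$ along a solution $(\eta,\omega_G)$ of $\dot\eta=B_S^T(\eta)\omega_G$, $M\dot\omega_G=-A\omega_G-B_G\Gamma\sin(\eta)+u$, initialized in a neighborhood of $(\bar\eta,\bar\omega_G)$ with $B_L\Gamma\sin(\eta(0))=B_L\Gamma\sin(\bar\eta)$, satisfies \[ \dot W=-(\omega_G-\bar\omega_G)^TA(\omega_G-\bar\omega_G)+(\omega_G-\bar\omega_G)^T(u-\bar u) \] on the interval of definition of the solution.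
   Context: A connected undirected graph with $n$ nodes and $m$ edges, nodes partitioned into $n_g$ generator and $n_\ell$ load nodes; $B$ is an incidence matrix partitioned row-wise as $B=\begin{bmatrix}B_G^T & B_L^T\end{bmatrix}^T$. $\Gamma=\mathrm{diag}(\gamma_k)$ is positive definite, $M,A$ positive definite diagonal. $\sin,\cos$ act elementwise, $\Omega=(-\frac{\pi}{2},\frac{\pi}{2})^m$, $\Gamma'(\eta)=\Gamma\,\mathrm{diag}(\cos(\eta_k))$, $B_S(\eta)=B_G\big(I-\Gamma'(\eta)B_L^T(B_L\Gamma'(\eta)B_L^T)^{-1}B_L\big)$, and $\mathbf{1}$ is the all-ones vector. $\bar u$ is a constant input and $(\bar\eta,\bar\omega_G)$ with $\bar\eta\in\Omega\cap\operatorname{im}B^T$, $\bar\omega_G=\mathbf{1}\omega^0$ ($\omega^0\in\mathbb{R}$) satisfies $0=B_S^T(\bar\eta)\bar\omega_G$ and $0=-A\bar\omega_G-B_G\Gamma\sin(\bar\eta)+\bar u$. *)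

theory Defs
  imports Complex_Main "Jordan_Normal_Form.Matrix" "Jordan_Normal_Form.Gauss_Jordan_Elimination"
begin

text \<open>Nodes are indexed 0..<n, the first ng being generator nodes, the remaining nl load nodes;
 edges are indexed 0..<m.\<close>

definition incidence_mat :: "real mat \<Rightarrow> nat \<Rightarrow> nat \<Rightarrow> bool" where
  "incidence_mat B n m \<longleftrightarrow> B \<in> carrier_mat n m \<and>
     (\<forall>j<m. \<exists>a<n. \<exists>b<n. a \<noteq> b \<and>
        (\<forall>i<n. B $$ (i,j) = (if i = a then 1 else if i = b then -1 else 0)))"

definition inc_adj :: "real mat \<Rightarrow> (nat \<times> nat) set" where
  "inc_adj B = {(i,k). i < dim_row B \<and> k < dim_row B \<and> i \<noteq> k \<and>
       (\<exists>j<dim_col B. B $$ (i,j) \<noteq> 0 \<and> B $$ (k,j) \<noteq> 0)}"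

definition connected_graph :: "real mat \<Rightarrow> bool" where
  "connected_graph B \<longleftrightarrow> (\<forall>i<dim_row B. \<forall>k<dim_row B. (i,k) \<in> (inc_adj B)\<^sup>*)"

definition gen_block :: "real mat \<Rightarrow> nat \<Rightarrow> real mat" where
  "gen_block B ng = mat ng (dim_col B) (\<lambda>(i,j). B $$ (i,j))"

definition load_block :: "real mat \<Rightarrow> nat \<Rightarrow> real mat" where
  "load_block B ng = mat (dim_row B - ng) (dim_col B) (\<lambda>(i,j). B $$ (ng + i, j))"

definition diag_vec :: "real vec \<Rightarrow> real mat" where
  "diag_vec v = mat (dim_vec v) (dim_vec v) (\<lambda>(i,j). if i = j then v $ i else 0)"

definition pos_diag :: "real mat \<Rightarrow> nat \<Rightarrow> bool" where
  "pos_diag D k \<longleftrightarrow> D \<in> carrier_mat k k \<and> diagonal_mat D \<and> (\<forall>i<k. D $$ (i,i) > 0)"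

definition ones_vec :: "nat \<Rightarrow> real vec" where "ones_vec k = vec k (\<lambda>_. 1)"

definition vsin :: "real vec \<Rightarrow> real vec" where "vsin v = map_vec sin v"
definition vcos :: "real vec \<Rightarrow> real vec" where "vcos v = map_vec cos v"

text \<open>Matrix inverse (the inverse computed by Gauss--Jordan; meaningful when invertible).\<close>
definition minv :: "real mat \<Rightarrow> real mat" where
  "minv X = the (mat_inverse X)"

definition Gamma' :: "real mat \<Rightarrow> real vec \<Rightarrow> real mat" where
  "Gamma' \<Gamma> \<eta> = \<Gamma> * diag_vec (vcos \<eta>)"

definition B_S :: "real mat \<Rightarrow> nat \<Rightarrow> real mat \<Rightarrow> real vec \<Rightarrow> real mat" where
  "B_S B ng \<Gamma> \<eta> =
     (let BG = gen_block B ng; BL = load_block B ng; G' = Gamma' \<Gamma> \<eta> in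
      BG * (one_mat (dim_col B) - G' * transpose_mat BL * minv (BL * G' * transpose_mat BL) * BL))"

definition Omega :: "nat \<Rightarrow> real vec set" where
  "Omega m = {v. v \<in> carrier_vec m \<and> (\<forall>k<m. - (pi/2) < v $ k \<and> v $ k < pi/2)}"

text \<open>The Lyapunov function W(eta, omega_G) (with the potential term -1^T Gamma cos eta).\<close>
definition W_fun :: "real mat \<Rightarrow> real mat \<Rightarrow> real vec \<Rightarrow> real vec \<Rightarrow> real vec \<Rightarrow> real vec \<Rightarrow> real" where
  "W_fun M \<Gamma> \<eta>b \<omega>b \<eta> \<omega> =
     1/2 * ((\<omega> - \<omega>b) \<bullet> (M *\<^sub>v (\<omega> - \<omega>b)))
     - ones_vec (dim_vec \<eta>) \<bullet> (\<Gamma> *\<^sub>v vcos \<eta>)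
     + ones_vec (dim_vec \<eta>b) \<bullet> (\<Gamma> *\<^sub>v vcos \<eta>b)
     - (\<Gamma> *\<^sub>v vsin \<eta>b) \<bullet> (\<eta> - \<eta>b)"

end

(* W is an incremental energy: along a solution its derivative is
     (w - wb)^T M w' + (Gamma sin eta - Gamma sin eta_b)^T eta'.
   The load-flow vector B_L Gamma sin eta is conserved, since its derivative
   B_L Gamma'(eta) B_S(eta)^T w vanishes: B_S(eta) Gamma'(eta) B_L^T = 0, the grounded Laplacian
   B_L Gamma'(eta) B_L^T being invertible on Omega for a connected graph with a generator. So the
   initial condition puts z = Gamma sin eta - Gamma sin eta_b into ker B_L, where B_S z = B_G z, and
   the second term becomes w^T B_G z. Substituting the swing and equilibrium equations into the
   first term, everything cancels except -(w - wb)^T A (w - wb) + (w - wb)^T (u - ub) and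
   wb^T B_G z = w0 1^T B z, which is zero because the columns of an incidence matrix sum to zero. *)

theory Submission
  imports Defs "Jordan_Normal_Form.Determinant"
begin

lemma diagonal_mult_mat_vec:
  assumes D: "D \<in> carrier_mat n n" "diagonal_mat D" and x: "x \<in> carrier_vec n"
  shows "D *\<^sub>v x = vec n (\<lambda>i. D $$ (i,i) * x $ i)"
proof (rule eq_vecI)
  fix i assume "i < dim_vec (vec n (\<lambda>i. D $$ (i,i) * x $ i))"
  then have i: "i < n" by simp
  have "(D *\<^sub>v x) $ i = (\<Sum>j\<in>{0..<n}. D $$ (i,j) * x $ j)"
    using D x i by (simp add: scalar_prod_def)
  also have "\<dots> = (\<Sum>j\<in>{0..<n}. if j = i then D $$ (i,i) * x $ i else 0)"
    using D i by (intro sum.cong) (auto simp: diagonal_mat_def)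
  finally show "(D *\<^sub>v x) $ i = vec n (\<lambda>i. D $$ (i,i) * x $ i) $ i" using i by simp
qed (use D in simp)

lemma diagonal_mat_transpose: "D \<in> carrier_mat n n \<Longrightarrow> diagonal_mat D \<Longrightarrow> transpose_mat D = D"
  by (intro eq_matI) (auto simp: diagonal_mat_def, metis)

lemma minv_mult_self:
  assumes K: "K \<in> carrier_mat n n" and det: "det K \<noteq> 0"
  shows "minv K * K = 1\<^sub>m n" "minv K \<in> carrier_mat n n"
proof -
  have "K \<in> Units (ring_mat TYPE(real) n ())" by (rule det_non_zero_imp_unit[OF K det])
  then obtain X where X: "mat_inverse K = Some X"
    using mat_inverse(1)[OF K] by fastforce
  then show "minv K * K = 1\<^sub>m n" "minv K \<in> carrier_mat n n"
    using mat_inverse(2)[OF K X] by (auto simp: minv_def)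
qed

lemma Gamma'_carrier: "\<Gamma> \<in> carrier_mat m m \<Longrightarrow> e \<in> carrier_vec m \<Longrightarrow> Gamma' \<Gamma> e \<in> carrier_mat m m"
  by (auto simp: Gamma'_def diag_vec_def vcos_def)

lemma Gamma'_index:
  assumes \<Gamma>: "\<Gamma> \<in> carrier_mat m m" "diagonal_mat \<Gamma>" and e: "e \<in> carrier_vec m"
    and ij: "i < m" "j < m"
  shows "Gamma' \<Gamma> e $$ (i,j) = (if i = j then \<Gamma> $$ (i,i) * cos (e $ i) else 0)"
proof -
  have "Gamma' \<Gamma> e $$ (i,j) = (\<Sum>k\<in>{0..<m}. \<Gamma> $$ (i,k) * diag_vec (vcos e) $$ (k,j))"
    using \<Gamma> e ij by (simp add: Gamma'_def diag_vec_def vcos_def scalar_prod_def)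
  also have "\<dots> = (\<Sum>k\<in>{0..<m}. if k = i then \<Gamma> $$ (i,i) * diag_vec (vcos e) $$ (i,j) else 0)"
    using \<Gamma> ij by (intro sum.cong) (auto simp: diagonal_mat_def)
  finally show ?thesis using e ij by (simp add: diag_vec_def vcos_def)
qed

lemma Gamma'_diagonal:
  assumes "\<Gamma> \<in> carrier_mat m m" "diagonal_mat \<Gamma>" and "e \<in> carrier_vec m"
  shows "diagonal_mat (Gamma' \<Gamma> e)"
  using Gamma'_carrier[OF assms(1,3)] by (auto simp: diagonal_mat_def Gamma'_index[OF assms])

lemma Gamma'_pos_diag:
  assumes \<Gamma>: "pos_diag \<Gamma> m" and e: "e \<in> Omega m"
  shows "pos_diag (Gamma' \<Gamma> e) m"
proof -
  have \<Gamma>': "\<Gamma> \<in> carrier_mat m m" "diagonal_mat \<Gamma>" and ec: "e \<in> carrier_vec m"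
    using \<Gamma> e by (auto simp: pos_diag_def Omega_def)
  have "\<Gamma> $$ (i,i) * cos (e $ i) > 0" if "i < m" for i
    using \<Gamma> e that unfolding pos_diag_def Omega_def by (simp add: cos_gt_zero_pi)
  with Gamma'_carrier[OF \<Gamma>'(1) ec] Gamma'_diagonal[OF \<Gamma>' ec] show ?thesis
    by (auto simp: pos_diag_def Gamma'_index[OF \<Gamma>' ec])
qed

lemma Gamma'_mult_vec:
  assumes \<Gamma>: "\<Gamma> \<in> carrier_mat m m" "diagonal_mat \<Gamma>" and e: "e \<in> carrier_vec m"
    and x: "x \<in> carrier_vec m"
  shows "Gamma' \<Gamma> e *\<^sub>v x = vec m (\<lambda>i. \<Gamma> $$ (i,i) * cos (e $ i) * x $ i)"
  using diagonal_mult_mat_vec[OF Gamma'_carrier[OF \<Gamma>(1) e] Gamma'_diagonal[OF \<Gamma> e] x] \<Gamma> e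
  by (auto simp: Gamma'_index)

section \<open>Incidence matrices\<close>

lemma incidence_mat_blocks:
  assumes "incidence_mat B (ng + nl) m"
  shows "B \<in> carrier_mat (ng + nl) m" "gen_block B ng \<in> carrier_mat ng m"
    "load_block B ng \<in> carrier_mat nl m"
  using assms by (auto simp: incidence_mat_def gen_block_def load_block_def)

lemma incidence_mat_column:
  assumes "incidence_mat B n m" "j < m"
  obtains a b where "a < n" "b < n" "a \<noteq> b"
    "\<And>y. (\<Sum>i\<in>{0..<n}. B $$ (i,j) * y i) = y a - y b"
proof -
  obtain a b where ab: "a < n" "b < n" "a \<noteq> b"
    "\<forall>i<n. B $$ (i,j) = (if i = a then 1 else if i = b then -1 else 0)"
    using assms unfolding incidence_mat_def by blast
  have "(\<Sum>i\<in>{0..<n}. B $$ (i,j) * y i) = y a - y b" for y :: "nat \<Rightarrow> real"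
  proof -
    have "(\<Sum>i\<in>{0..<n}. B $$ (i,j) * y i)
        = (\<Sum>i\<in>{0..<n}. (if i = a then y a else 0) - (if i = b then y b else 0))"
      using ab by (intro sum.cong) auto
    then show ?thesis using ab by (simp add: sum_subtractf)
  qed
  with ab that show thesis by blast
qed

lemma incidence_mat_column_sum:
  assumes "incidence_mat B n m" "j < m"
  shows "(\<Sum>i\<in>{0..<n}. B $$ (i,j)) = 0"
proof -
  obtain a b where "\<And>y. (\<Sum>i\<in>{0..<n}. B $$ (i,j) * y i) = y a - y b"
    using incidence_mat_column[OF assms] by metis
  from this[of "\<lambda>_. 1"] show ?thesis by simp
qed

lemma sum_atLeast0_lessThan_add:
  "(\<Sum>i\<in>{0..<a + b}. f i) = (\<Sum>i\<in>{0..<a}. f i) + (\<Sum>i\<in>{0..<b}. f (a + i :: nat))"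
proof -
  have "(\<Sum>i\<in>{a..<a + b}. f i) = (\<Sum>i\<in>{0..<b}. f (a + i))"
    using sum.shift_bounds_nat_ivl[of f 0 a b] by (simp add: add.commute)
  then show ?thesis using sum.atLeastLessThan_concat[of 0 a "a + b" f] by simp
qed

lemma ones_scalar_prod_gen_block:
  assumes inc: "incidence_mat B (ng + nl) m" and z: "z \<in> carrier_vec m"
    and load: "load_block B ng *\<^sub>v z = 0\<^sub>v nl"
  shows "ones_vec ng \<bullet> (gen_block B ng *\<^sub>v z) = 0"
proof -
  note blocks = incidence_mat_blocks[OF inc]
  have "(\<Sum>j\<in>{0..<m}. B $$ (ng + i, j) * z $ j) = 0" if "i < nl" for i
    using arg_cong[OF load, of "\<lambda>v. v $ i"] that blocks z
    by (simp add: load_block_def scalar_prod_def)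
  then have "ones_vec ng \<bullet> (gen_block B ng *\<^sub>v z)
      = (\<Sum>i\<in>{0..<ng}. \<Sum>j\<in>{0..<m}. B $$ (i,j) * z $ j)
        + (\<Sum>i\<in>{0..<nl}. \<Sum>j\<in>{0..<m}. B $$ (ng + i, j) * z $ j)"
    using blocks z by (simp add: ones_vec_def gen_block_def scalar_prod_def)
  also have "\<dots> = (\<Sum>i\<in>{0..<ng + nl}. \<Sum>j\<in>{0..<m}. B $$ (i,j) * z $ j)"
    by (rule sum_atLeast0_lessThan_add[symmetric])
  also have "\<dots> = (\<Sum>j\<in>{0..<m}. (\<Sum>i\<in>{0..<ng + nl}. B $$ (i,j)) * z $ j)"
    by (simp add: sum.swap[of _ "{0..<ng + nl}"] sum_distrib_right)
  also have "\<dots> = 0"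
    using incidence_mat_column_sum[OF inc] by simp
  finally show ?thesis .
qed

text \<open>A vector on the load nodes that is annihilated by the transposed load block extends by zero
  on the generator nodes to a potential with equal values across every edge; connectivity and
  the presence of a generator force it to vanish.\<close>
lemma load_block_transpose_kernel:
  assumes inc: "incidence_mat B (ng + nl) m" and conn: "connected_graph B" and ng: "0 < ng"
    and v: "v \<in> carrier_vec nl" and ker: "transpose_mat (load_block B ng) *\<^sub>v v = 0\<^sub>v m"
  shows "v = 0\<^sub>v nl"
proof -
  define n where "n = ng + nl"
  define y where "y i = (if i < ng then 0 else v $ (i - ng))" for i
  note blocks = incidence_mat_blocks[OF inc]
  have edge: "(\<Sum>i\<in>{0..<n}. B $$ (i,j) * y i) = 0" if j: "j < m" for j
  proof -
    have "(transpose_mat (load_block B ng) *\<^sub>v v) $ j = (\<Sum>i\<in>{0..<nl}. B $$ (ng + i, j) * v $ i)"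
      using blocks v j by (simp add: load_block_def scalar_prod_def mult.commute)
    then show ?thesis
      using ker j unfolding n_def sum_atLeast0_lessThan_add by (simp add: y_def)
  qed
  have adj: "y i = y k" if "(i,k) \<in> inc_adj B" for i k
  proof -
    from that blocks obtain j where ik: "i < n" "k < n" "i \<noteq> k" "j < m"
      "B $$ (i,j) \<noteq> 0" "B $$ (k,j) \<noteq> 0"
      unfolding inc_adj_def n_def by auto
    obtain a b where ab: "a < n" "b < n" "a \<noteq> b" "\<And>y. (\<Sum>i\<in>{0..<n}. B $$ (i,j) * y i) = y a - y b"
      using incidence_mat_column[OF inc[folded n_def] ik(4)] by metis
    have "B $$ (l,j) = 0" if "l < n" "l \<noteq> a" "l \<noteq> b" for l
      using ab(4)[of "\<lambda>l'. if l' = l then 1 else 0"] that by (simp add: if_distrib cong: if_cong)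
    then have "i \<in> {a, b}" "k \<in> {a, b}" using ik by blast+
    moreover have "y a = y b" using edge[OF ik(4)] ab(4) by simp
    ultimately show ?thesis by auto
  qed
  have "y k = y 0" if "(0,k) \<in> (inc_adj B)\<^sup>*" for k
    using that by (induction rule: rtrancl_induct) (auto dest: adj)
  then have "y k = 0" if "k < n" for k
    using conn that ng blocks unfolding connected_graph_def by (auto simp: y_def n_def)
  from this[of "ng + i" for i] show ?thesis
    using v by (intro eq_vecI) (auto simp: y_def n_def)
qed

text \<open>\<open>B\<^sub>L D B\<^sub>L\<^sup>T\<close> is the weighted Laplacian with the generator nodes grounded; its quadratic form
  is positive definite by the previous lemma.\<close>
lemma det_grounded_laplacian_nonzero:
  assumes inc: "incidence_mat B (ng + nl) m" and conn: "connected_graph B" and ng: "0 < ng"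
    and D: "pos_diag D m"
  shows "det (load_block B ng * D * transpose_mat (load_block B ng)) \<noteq> 0"
proof
  define BL where "BL = load_block B ng"
  have BL: "BL \<in> carrier_mat nl m" using incidence_mat_blocks[OF inc] by (simp add: BL_def)
  have Dc: "D \<in> carrier_mat m m" "diagonal_mat D" and Dpos: "\<And>i. i < m \<Longrightarrow> D $$ (i,i) > 0"
    using D by (auto simp: pos_diag_def)
  assume "det (load_block B ng * D * transpose_mat (load_block B ng)) = 0"
  then obtain v where v: "v \<in> carrier_vec nl" "v \<noteq> 0\<^sub>v nl" "(BL * D * transpose_mat BL) *\<^sub>v v = 0\<^sub>v nl"
    using det_0_iff_vec_prod_zero[of "BL * D * transpose_mat BL" nl] BL Dc unfolding BL_def by auto
  define p where "p = transpose_mat BL *\<^sub>v v"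
  have p: "p \<in> carrier_vec m" using BL v by (simp add: p_def)
  have "(BL * D * transpose_mat BL) *\<^sub>v v = BL *\<^sub>v (D *\<^sub>v p)"
    using BL Dc v(1) assoc_mult_mat_vec[of "BL * D" nl m "transpose_mat BL" nl v]
    by (simp add: p_def del: assoc_mult_mat)
  with v(3) have "BL *\<^sub>v (D *\<^sub>v p) = 0\<^sub>v nl" by simp
  then have "0 = v \<bullet> (BL *\<^sub>v (D *\<^sub>v p))" using v(1) by simp
  also have "\<dots> = p \<bullet> (D *\<^sub>v p)"
    using BL Dc v p by (simp add: p_def transpose_vec_mult_scalar)
  also have "\<dots> = (\<Sum>i\<in>{0..<m}. D $$ (i,i) * (p $ i)\<^sup>2)"
    using p by (simp add: diagonal_mult_mat_vec[OF Dc p] scalar_prod_def power2_eq_square ac_simps)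
  finally have "(\<Sum>i\<in>{0..<m}. D $$ (i,i) * (p $ i)\<^sup>2) = 0" by simp
  then have "\<forall>i\<in>{0..<m}. D $$ (i,i) * (p $ i)\<^sup>2 = 0"
    using Dpos by (subst sum_nonneg_eq_0_iff[symmetric]) (auto simp: less_imp_le)
  then have "p $ i = 0" if "i < m" for i
    using Dpos[OF that] that by force
  then have "p = 0\<^sub>v m" using p by (intro eq_vecI) auto
  then have "v = 0\<^sub>v nl"
    using load_block_transpose_kernel[OF inc conn ng v(1)] by (simp add: p_def BL_def)
  with v(2) show False ..
qed

section \<open>The matrix \<open>B\<^sub>S(\<eta>)\<close>\<close>

lemma mult_mat_vec_zero: "A \<in> carrier_mat nr nc \<Longrightarrow> A *\<^sub>v 0\<^sub>v nc = 0\<^sub>v nr"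
  by (intro eq_vecI) (auto simp: scalar_prod_def)

lemma zero_mult_mat_vec: "v \<in> carrier_vec nc \<Longrightarrow> 0\<^sub>m nr nc *\<^sub>v v = 0\<^sub>v nr"
  by (intro eq_vecI) (auto simp: scalar_prod_def)

text \<open>\<open>B\<^sub>S = B\<^sub>G (I - Q)\<close>, where \<open>Q = \<Gamma>' B\<^sub>L\<^sup>T (B\<^sub>L \<Gamma>' B\<^sub>L\<^sup>T)\<^sup>-\<^sup>1 B\<^sub>L\<close> is the projection onto
  \<open>im (\<Gamma>' B\<^sub>L\<^sup>T)\<close> along \<open>ker B\<^sub>L\<close>.\<close>
context
  fixes B \<Gamma> :: "real mat" and ng nl m :: nat and e :: "real vec"
  assumes inc: "incidence_mat B (ng + nl) m" and conn: "connected_graph B" and ng: "0 < ng"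
    and \<Gamma>: "pos_diag \<Gamma> m" and e: "e \<in> Omega m"
begin

private abbreviation (input) "BG \<equiv> gen_block B ng"
private abbreviation (input) "BL \<equiv> load_block B ng"
private abbreviation (input) "P \<equiv> Gamma' \<Gamma> e * transpose_mat BL"
private abbreviation (input) "X \<equiv> minv (BL * Gamma' \<Gamma> e * transpose_mat BL)"

private lemma B_S_factors:
  "BG \<in> carrier_mat ng m" "BL \<in> carrier_mat nl m" "P \<in> carrier_mat m nl" "X \<in> carrier_mat nl nl"
  "X * (BL * P) = 1\<^sub>m nl" "B_S B ng \<Gamma> e = BG * (1\<^sub>m m - P * X * BL)"
proof -
  have G': "pos_diag (Gamma' \<Gamma> e) m" by (rule Gamma'_pos_diag[OF \<Gamma> e])
  then have G'c: "Gamma' \<Gamma> e \<in> carrier_mat m m" by (simp add: pos_diag_def)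
  show BG: "BG \<in> carrier_mat ng m" and BL: "BL \<in> carrier_mat nl m"
    using incidence_mat_blocks[OF inc] by auto
  show "P \<in> carrier_mat m nl" using G'c BL by simp
  have "BL * Gamma' \<Gamma> e * transpose_mat BL = BL * P"
    using BL G'c by (simp add: assoc_mult_mat[of _ nl m _ m _ nl])
  moreover have "BL * Gamma' \<Gamma> e * transpose_mat BL \<in> carrier_mat nl nl"
    using BL G'c by simp
  ultimately show "X \<in> carrier_mat nl nl" "X * (BL * P) = 1\<^sub>m nl"
    using minv_mult_self[OF _ det_grounded_laplacian_nonzero[OF inc conn ng G']] by auto
  show "B_S B ng \<Gamma> e = BG * (1\<^sub>m m - P * X * BL)"
    using incidence_mat_blocks(1)[OF inc] by (simp add: B_S_def Let_def)
qed

lemma B_S_carrier: "B_S B ng \<Gamma> e \<in> carrier_mat ng m"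
proof -
  have "P * X * BL \<in> carrier_mat m m" using B_S_factors by simp
  then show ?thesis unfolding B_S_factors(6) by (rule mult_carrier_mat[OF B_S_factors(1) minus_carrier_mat])
qed

lemma B_S_mult_vec_load_kernel:
  assumes z: "z \<in> carrier_vec m" and load: "BL *\<^sub>v z = 0\<^sub>v nl"
  shows "B_S B ng \<Gamma> e *\<^sub>v z = BG *\<^sub>v z"
proof -
  note F = B_S_factors
  have PX: "P * X \<in> carrier_mat m nl" using F by simp
  have Q: "P * X * BL \<in> carrier_mat m m" using PX F by simp
  have "(P * X * BL) *\<^sub>v z = 0\<^sub>v m"
    using assoc_mult_mat_vec[OF PX F(2) z] PX load by (simp add: mult_mat_vec_zero)
  then have "(1\<^sub>m m - P * X * BL) *\<^sub>v z = z"
    using minus_mult_distrib_mat_vec[OF one_carrier_mat Q z] z by simp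
  then show ?thesis
    unfolding F(6) using assoc_mult_mat_vec[OF F(1) minus_carrier_mat[OF Q] z] by simp
qed

lemma B_S_mult_Gamma'_load_transpose: "B_S B ng \<Gamma> e * P = 0\<^sub>m ng nl"
proof -
  note F = B_S_factors
  have PX: "P * X \<in> carrier_mat m nl" using F by simp
  have Q: "P * X * BL \<in> carrier_mat m m" using PX F by simp
  have BLP: "BL * P \<in> carrier_mat nl nl" using F by simp
  have "P * X * BL * P = P * X * (BL * P)"
    using assoc_mult_mat[OF PX F(2) F(3)] .
  also have "\<dots> = P * (X * (BL * P))"
    using assoc_mult_mat[OF F(3) F(4) BLP] .
  finally have "P * X * BL * P = P" using F(5) right_mult_one_mat[OF F(3)] by simp
  then have "(1\<^sub>m m - P * X * BL) * P = 0\<^sub>m m nl"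
    using minus_mult_distrib_mat[OF one_carrier_mat Q F(3)] left_mult_one_mat[OF F(3)] F(3) by simp
  then show ?thesis
    unfolding F(6) using assoc_mult_mat[OF F(1) minus_carrier_mat[OF Q] F(3)] F(1) by simp
qed

lemma load_Gamma'_B_S_transpose:
  assumes w: "w \<in> carrier_vec ng"
  shows "BL *\<^sub>v (Gamma' \<Gamma> e *\<^sub>v (transpose_mat (B_S B ng \<Gamma> e) *\<^sub>v w)) = 0\<^sub>v nl"
proof -
  note F = B_S_factors
  have G': "Gamma' \<Gamma> e \<in> carrier_mat m m" "diagonal_mat (Gamma' \<Gamma> e)"
    using Gamma'_pos_diag[OF \<Gamma> e] by (auto simp: pos_diag_def)
  have S: "transpose_mat (B_S B ng \<Gamma> e) \<in> carrier_mat m ng"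
    using B_S_carrier by simp
  have "transpose_mat P = BL * Gamma' \<Gamma> e"
    using transpose_mult[OF G'(1), of "transpose_mat BL" nl] F(2) diagonal_mat_transpose[OF G'] by simp
  then have "BL * Gamma' \<Gamma> e * transpose_mat (B_S B ng \<Gamma> e) = 0\<^sub>m nl ng"
    using arg_cong[OF B_S_mult_Gamma'_load_transpose, of transpose_mat]
      transpose_mult[OF B_S_carrier F(3)] by simp
  then have "(BL * Gamma' \<Gamma> e) *\<^sub>v (transpose_mat (B_S B ng \<Gamma> e) *\<^sub>v w) = 0\<^sub>v nl"
    using assoc_mult_mat_vec[OF _ S w, of "BL * Gamma' \<Gamma> e" nl] F(2) G'(1) w
    by (simp add: zero_mult_mat_vec)
  then show ?thesis
    using assoc_mult_mat_vec[OF F(2) G'(1), of "transpose_mat (B_S B ng \<Gamma> e) *\<^sub>v w"] S w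
    by simp
qed

end

section \<open>Derivatives along solutions\<close>

lemma has_real_derivative_zero_constant_on_interval:
  fixes f :: "real \<Rightarrow> real"
  assumes I: "\<forall>a\<in>I. \<forall>b\<in>I. {a..b} \<subseteq> I"
    and f': "\<And>t. t \<in> I \<Longrightarrow> (f has_real_derivative 0) (at t within I)"
    and x: "x \<in> I" and y: "y \<in> I"
  shows "f y = f x"
proof -
  have "f b = f a" if ab: "a \<in> I" "b \<in> I" "a < b" for a b
  proof (rule DERIV_isconst_end[OF ab(3)])
    have sub: "{a..b} \<subseteq> I" using I ab by auto
    show "continuous_on {a..b} f"
      using sub f' DERIV_continuous unfolding continuous_on_eq_continuous_within continuous_within
      by (meson subsetD tendsto_within_subset)
    fix t assume t: "a < t" "t < b"
    have "at t within I = at t"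
      using t sub by (intro at_within_open_subset[of t "{a<..<b}"]) auto
    moreover have "t \<in> I" using t sub by auto
    ultimately show "DERIV f t :> 0" using f' by metis
  qed
  then show ?thesis using x y by (metis linorder_neq_iff)
qed

lemma mult_mat_vec_Gamma_vsin_has_real_derivative:
  assumes \<Gamma>: "\<Gamma> \<in> carrier_mat m m" "diagonal_mat \<Gamma>" and C: "C \<in> carrier_mat r m" and i: "i < r"
    and \<eta>: "\<And>s. s \<in> S \<Longrightarrow> \<eta> s \<in> carrier_vec m" and t: "t \<in> S" and \<eta>': "\<eta>' \<in> carrier_vec m"
    and d: "\<And>k. k < m \<Longrightarrow> ((\<lambda>s. \<eta> s $ k) has_real_derivative \<eta>' $ k) (at t within S)"
  shows "((\<lambda>s. (C *\<^sub>v (\<Gamma> *\<^sub>v vsin (\<eta> s))) $ i) has_real_derivative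
           (C *\<^sub>v (Gamma' \<Gamma> (\<eta> t) *\<^sub>v \<eta>')) $ i) (at t within S)"
proof -
  have eq: "(C *\<^sub>v (\<Gamma> *\<^sub>v vsin x)) $ i = (\<Sum>k\<in>{0..<m}. C $$ (i,k) * (\<Gamma> $$ (k,k) * sin (x $ k)))"
    if "x \<in> carrier_vec m" for x
    using that C i by (simp add: diagonal_mult_mat_vec[OF \<Gamma>] vsin_def scalar_prod_def)
  have val: "(\<Sum>k\<in>{0..<m}. C $$ (i,k) * (\<Gamma> $$ (k,k) * (cos (\<eta> t $ k) * \<eta>' $ k)))
      = (C *\<^sub>v (Gamma' \<Gamma> (\<eta> t) *\<^sub>v \<eta>')) $ i"
    using C i \<eta>' by (simp add: Gamma'_mult_vec[OF \<Gamma> \<eta>[OF t] \<eta>'] scalar_prod_def ac_simps)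
  have "((\<lambda>s. \<Sum>k\<in>{0..<m}. C $$ (i,k) * (\<Gamma> $$ (k,k) * sin (\<eta> s $ k))) has_real_derivative
      (\<Sum>k\<in>{0..<m}. C $$ (i,k) * (\<Gamma> $$ (k,k) * (cos (\<eta> t $ k) * \<eta>' $ k)))) (at t within S)"
    by (intro DERIV_sum DERIV_cmult DERIV_sin[THEN DERIV_chain2] d) simp
  then show ?thesis
    unfolding val
    by (rule has_field_derivative_transform_within[where d=1]) (simp_all add: eq \<eta> t)
qed

lemma load_block_Gamma_vsin_constant:
  assumes inc: "incidence_mat B (ng + nl) m" and conn: "connected_graph B" and ng: "0 < ng"
    and \<Gamma>: "pos_diag \<Gamma> m" and I: "\<forall>a\<in>I. \<forall>b\<in>I. {a..b} \<subseteq> I"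
    and \<eta>: "\<And>t. t \<in> I \<Longrightarrow> \<eta> t \<in> Omega m" and \<omega>: "\<And>t. t \<in> I \<Longrightarrow> \<omega> t \<in> carrier_vec ng"
    and d\<eta>: "\<And>t k. t \<in> I \<Longrightarrow> k < m \<Longrightarrow> ((\<lambda>s. \<eta> s $ k) has_real_derivative
               (transpose_mat (B_S B ng \<Gamma> (\<eta> t)) *\<^sub>v \<omega> t) $ k) (at t within I)"
    and s: "s \<in> I" and t: "t \<in> I"
  shows "load_block B ng *\<^sub>v (\<Gamma> *\<^sub>v vsin (\<eta> t)) = load_block B ng *\<^sub>v (\<Gamma> *\<^sub>v vsin (\<eta> s))"
proof (rule eq_vecI)
  have \<Gamma>c: "\<Gamma> \<in> carrier_mat m m" "diagonal_mat \<Gamma>" using \<Gamma> by (auto simp: pos_diag_def)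
  have BL: "load_block B ng \<in> carrier_mat nl m" using incidence_mat_blocks[OF inc] by simp
  fix i assume "i < dim_vec (load_block B ng *\<^sub>v (\<Gamma> *\<^sub>v vsin (\<eta> s)))"
  then have i: "i < nl" using BL by simp
  have "((\<lambda>s. (load_block B ng *\<^sub>v (\<Gamma> *\<^sub>v vsin (\<eta> s))) $ i) has_real_derivative 0) (at r within I)"
    if r: "r \<in> I" for r
  proof -
    have "transpose_mat (B_S B ng \<Gamma> (\<eta> r)) *\<^sub>v \<omega> r \<in> carrier_vec m"
      using B_S_carrier[OF inc conn ng \<Gamma> \<eta>[OF r]] \<omega>[OF r] by simp
    from mult_mat_vec_Gamma_vsin_has_real_derivative[OF \<Gamma>c BL i _ r this d\<eta>[OF r]]
    show ?thesis
      using load_Gamma'_B_S_transpose[OF inc conn ng \<Gamma> \<eta>[OF r] \<omega>[OF r]] \<eta> i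
      by (simp add: Omega_def)
  qed
  then show "(load_block B ng *\<^sub>v (\<Gamma> *\<^sub>v vsin (\<eta> t))) $ i = (load_block B ng *\<^sub>v (\<Gamma> *\<^sub>v vsin (\<eta> s))) $ i"
    by (rule has_real_derivative_zero_constant_on_interval[OF I _ s t])
qed simp

lemma W_fun_eq_sum:
  assumes \<Gamma>: "\<Gamma> \<in> carrier_mat m m" "diagonal_mat \<Gamma>" and M: "M \<in> carrier_mat n n" "diagonal_mat M"
    and \<eta>: "\<eta> \<in> carrier_vec m" "\<eta>b \<in> carrier_vec m" and \<omega>: "\<omega> \<in> carrier_vec n" "\<omega>b \<in> carrier_vec n"
  shows "W_fun M \<Gamma> \<eta>b \<omega>b \<eta> \<omega> =
      1/2 * (\<Sum>j\<in>{0..<n}. M $$ (j,j) * (\<omega> $ j - \<omega>b $ j)\<^sup>2)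
    - (\<Sum>k\<in>{0..<m}. \<Gamma> $$ (k,k) * cos (\<eta> $ k))
    + ones_vec m \<bullet> (\<Gamma> *\<^sub>v vcos \<eta>b)
    - (\<Sum>k\<in>{0..<m}. \<Gamma> $$ (k,k) * sin (\<eta>b $ k) * (\<eta> $ k - \<eta>b $ k))"
proof -
  have "\<omega> - \<omega>b \<in> carrier_vec n" using \<omega> by simp
  then have "(\<omega> - \<omega>b) \<bullet> (M *\<^sub>v (\<omega> - \<omega>b)) = (\<Sum>j\<in>{0..<n}. M $$ (j,j) * (\<omega> $ j - \<omega>b $ j)\<^sup>2)"
    using \<omega> unfolding diagonal_mult_mat_vec[OF M \<open>\<omega> - \<omega>b \<in> carrier_vec n\<close>] scalar_prod_def
    by (intro sum.cong) (auto simp: power2_eq_square)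
  moreover have "ones_vec (dim_vec \<eta>) \<bullet> (\<Gamma> *\<^sub>v vcos \<eta>) = (\<Sum>k\<in>{0..<m}. \<Gamma> $$ (k,k) * cos (\<eta> $ k))"
    using \<eta> diagonal_mult_mat_vec[OF \<Gamma>, of "vcos \<eta>"] by (simp add: scalar_prod_def ones_vec_def vcos_def)
  moreover have "(\<Gamma> *\<^sub>v vsin \<eta>b) \<bullet> (\<eta> - \<eta>b) = (\<Sum>k\<in>{0..<m}. \<Gamma> $$ (k,k) * sin (\<eta>b $ k) * (\<eta> $ k - \<eta>b $ k))"
    using \<eta> diagonal_mult_mat_vec[OF \<Gamma>, of "vsin \<eta>b"] by (simp add: scalar_prod_def vsin_def)
  ultimately show ?thesis using \<eta> by (simp add: W_fun_def)
qed

lemma energy_rate_eq_sum: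
  assumes \<Gamma>: "\<Gamma> \<in> carrier_mat m m" "diagonal_mat \<Gamma>" and M: "M \<in> carrier_mat n n" "diagonal_mat M"
    and \<eta>: "\<eta> \<in> carrier_vec m" "\<eta>b \<in> carrier_vec m" and \<omega>: "\<omega> \<in> carrier_vec n" "\<omega>b \<in> carrier_vec n"
    and \<eta>': "\<eta>' \<in> carrier_vec m" and \<omega>': "\<omega>' \<in> carrier_vec n"
  shows "(\<omega> - \<omega>b) \<bullet> (M *\<^sub>v \<omega>') + (\<Gamma> *\<^sub>v vsin \<eta> - \<Gamma> *\<^sub>v vsin \<eta>b) \<bullet> \<eta>'
      = (\<Sum>j\<in>{0..<n}. (\<omega> $ j - \<omega>b $ j) * (M $$ (j,j) * \<omega>' $ j))
        + (\<Sum>k\<in>{0..<m}. (\<Gamma> $$ (k,k) * sin (\<eta> $ k) - \<Gamma> $$ (k,k) * sin (\<eta>b $ k)) * \<eta>' $ k)"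
proof -
  have "(\<omega> - \<omega>b) \<bullet> (M *\<^sub>v \<omega>') = (\<Sum>j\<in>{0..<n}. (\<omega> $ j - \<omega>b $ j) * (M $$ (j,j) * \<omega>' $ j))"
    using \<omega> \<omega>' by (simp add: diagonal_mult_mat_vec[OF M \<omega>'] scalar_prod_def)
  moreover have "(\<Gamma> *\<^sub>v vsin \<eta> - \<Gamma> *\<^sub>v vsin \<eta>b) \<bullet> \<eta>'
      = (\<Sum>k\<in>{0..<m}. (\<Gamma> $$ (k,k) * sin (\<eta> $ k) - \<Gamma> $$ (k,k) * sin (\<eta>b $ k)) * \<eta>' $ k)"
    using \<eta> \<eta>' diagonal_mult_mat_vec[OF \<Gamma>, of "vsin \<eta>"] diagonal_mult_mat_vec[OF \<Gamma>, of "vsin \<eta>b"]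
    by (simp add: scalar_prod_def vsin_def)
  ultimately show ?thesis by simp
qed

lemma W_fun_has_real_derivative:
  assumes \<Gamma>: "\<Gamma> \<in> carrier_mat m m" "diagonal_mat \<Gamma>" and M: "M \<in> carrier_mat n n" "diagonal_mat M"
    and b: "\<eta>b \<in> carrier_vec m" "\<omega>b \<in> carrier_vec n"
    and \<eta>: "\<And>s. s \<in> S \<Longrightarrow> \<eta> s \<in> carrier_vec m" and \<omega>: "\<And>s. s \<in> S \<Longrightarrow> \<omega> s \<in> carrier_vec n"
    and t: "t \<in> S"
    and \<eta>': "\<eta>' \<in> carrier_vec m" and \<omega>': "\<omega>' \<in> carrier_vec n"
    and d\<eta>: "\<And>k. k < m \<Longrightarrow> ((\<lambda>s. \<eta> s $ k) has_real_derivative \<eta>' $ k) (at t within S)"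
    and d\<omega>: "\<And>j. j < n \<Longrightarrow> ((\<lambda>s. \<omega> s $ j) has_real_derivative \<omega>' $ j) (at t within S)"
  shows "((\<lambda>s. W_fun M \<Gamma> \<eta>b \<omega>b (\<eta> s) (\<omega> s)) has_real_derivative
           (\<omega> t - \<omega>b) \<bullet> (M *\<^sub>v \<omega>') + (\<Gamma> *\<^sub>v vsin (\<eta> t) - \<Gamma> *\<^sub>v vsin \<eta>b) \<bullet> \<eta>')
         (at t within S)"
proof -
  let ?W = "\<lambda>s. 1/2 * (\<Sum>j\<in>{0..<n}. M $$ (j,j) * (\<omega> s $ j - \<omega>b $ j)\<^sup>2)
    - (\<Sum>k\<in>{0..<m}. \<Gamma> $$ (k,k) * cos (\<eta> s $ k))
    + ones_vec m \<bullet> (\<Gamma> *\<^sub>v vcos \<eta>b)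
    - (\<Sum>k\<in>{0..<m}. \<Gamma> $$ (k,k) * sin (\<eta>b $ k) * (\<eta> s $ k - \<eta>b $ k))"
  have deriv: "(?W has_real_derivative
      1/2 * (\<Sum>j\<in>{0..<n}. M $$ (j,j) * (2 * (\<omega> t $ j - \<omega>b $ j) * \<omega>' $ j))
    - (\<Sum>k\<in>{0..<m}. \<Gamma> $$ (k,k) * (- sin (\<eta> t $ k) * \<eta>' $ k))
    + 0
    - (\<Sum>k\<in>{0..<m}. \<Gamma> $$ (k,k) * sin (\<eta>b $ k) * (\<eta>' $ k - 0))) (at t within S)"
  proof -
    have dM: "((\<lambda>s. M $$ (j,j) * (\<omega> s $ j - \<omega>b $ j)\<^sup>2) has_real_derivative
        M $$ (j,j) * (2 * (\<omega> t $ j - \<omega>b $ j) * \<omega>' $ j)) (at t within S)" if "j < n" for j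
      using DERIV_cmult[OF DERIV_power[where n=2, OF DERIV_diff[OF d\<omega>[OF that] DERIV_const]], of "M $$ (j,j)"]
      by (simp add: ac_simps)
    have dcos: "((\<lambda>s. \<Gamma> $$ (k,k) * cos (\<eta> s $ k)) has_real_derivative
        \<Gamma> $$ (k,k) * (- sin (\<eta> t $ k) * \<eta>' $ k)) (at t within S)" if "k < m" for k
      by (intro DERIV_cmult DERIV_cos[THEN DERIV_chain2] d\<eta> that)
    have dsin: "((\<lambda>s. \<Gamma> $$ (k,k) * sin (\<eta>b $ k) * (\<eta> s $ k - \<eta>b $ k)) has_real_derivative
        \<Gamma> $$ (k,k) * sin (\<eta>b $ k) * (\<eta>' $ k - 0)) (at t within S)" if "k < m" for k
      by (intro DERIV_cmult DERIV_diff DERIV_const d\<eta> that)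
    show ?thesis
      by (intro DERIV_diff DERIV_add DERIV_cmult[where c="1/2"] DERIV_const DERIV_sum dM dcos dsin)
        auto
  qed
  have "1/2 * (\<Sum>j\<in>{0..<n}. M $$ (j,j) * (2 * (\<omega> t $ j - \<omega>b $ j) * \<omega>' $ j))
        = (\<Sum>j\<in>{0..<n}. (\<omega> t $ j - \<omega>b $ j) * (M $$ (j,j) * \<omega>' $ j))"
    unfolding sum_distrib_left by (intro sum.cong) simp_all
  moreover have "- (\<Sum>k\<in>{0..<m}. \<Gamma> $$ (k,k) * (- sin (\<eta> t $ k) * \<eta>' $ k))
        - (\<Sum>k\<in>{0..<m}. \<Gamma> $$ (k,k) * sin (\<eta>b $ k) * (\<eta>' $ k - 0))
      = (\<Sum>k\<in>{0..<m}. (\<Gamma> $$ (k,k) * sin (\<eta> t $ k) - \<Gamma> $$ (k,k) * sin (\<eta>b $ k)) * \<eta>' $ k)"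
    by (simp add: sum_negf[symmetric] sum_subtractf[symmetric] algebra_simps)
  ultimately have val: "1/2 * (\<Sum>j\<in>{0..<n}. M $$ (j,j) * (2 * (\<omega> t $ j - \<omega>b $ j) * \<omega>' $ j))
    - (\<Sum>k\<in>{0..<m}. \<Gamma> $$ (k,k) * (- sin (\<eta> t $ k) * \<eta>' $ k))
    + 0
    - (\<Sum>k\<in>{0..<m}. \<Gamma> $$ (k,k) * sin (\<eta>b $ k) * (\<eta>' $ k - 0))
    = (\<omega> t - \<omega>b) \<bullet> (M *\<^sub>v \<omega>') + (\<Gamma> *\<^sub>v vsin (\<eta> t) - \<Gamma> *\<^sub>v vsin \<eta>b) \<bullet> \<eta>'"
    unfolding energy_rate_eq_sum[OF \<Gamma> M \<eta>[OF t] b(1) \<omega>[OF t] b(2) \<eta>' \<omega>'] by linarith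
  from deriv[unfolded val] show ?thesis
    by (rule has_field_derivative_transform_within[where d=1])
      (simp_all add: t \<eta> \<omega> W_fun_eq_sum[OF \<Gamma> M _ b(1) _ b(2)])
qed

section \<open>The energy balance\<close>

lemma swing_power_balance:
  assumes inc: "incidence_mat B (ng + nl) m" and conn: "connected_graph B" and ng: "0 < ng"
    and \<Gamma>: "pos_diag \<Gamma> m" and \<eta>: "\<eta> \<in> Omega m" and \<eta>b: "\<eta>b \<in> carrier_vec m"
    and A: "A \<in> carrier_mat ng ng"
    and vecs: "\<omega> \<in> carrier_vec ng" "u \<in> carrier_vec ng" "ub \<in> carrier_vec ng"
    and dyn: "M *\<^sub>v \<omega>' = - (A *\<^sub>v \<omega>) - gen_block B ng *\<^sub>v (\<Gamma> *\<^sub>v vsin \<eta>) + u"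
    and eq: "0\<^sub>v ng = - (A *\<^sub>v \<omega>b) - gen_block B ng *\<^sub>v (\<Gamma> *\<^sub>v vsin \<eta>b) + ub"
    and \<omega>b: "\<omega>b = \<omega>0 \<cdot>\<^sub>v ones_vec ng"
    and load: "load_block B ng *\<^sub>v (\<Gamma> *\<^sub>v vsin \<eta>) = load_block B ng *\<^sub>v (\<Gamma> *\<^sub>v vsin \<eta>b)"
  shows "(\<omega> - \<omega>b) \<bullet> (M *\<^sub>v \<omega>')
           + (\<Gamma> *\<^sub>v vsin \<eta> - \<Gamma> *\<^sub>v vsin \<eta>b) \<bullet> (transpose_mat (B_S B ng \<Gamma> \<eta>) *\<^sub>v \<omega>)
         = - ((\<omega> - \<omega>b) \<bullet> (A *\<^sub>v (\<omega> - \<omega>b))) + (\<omega> - \<omega>b) \<bullet> (u - ub)"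
proof -
  note blocks = incidence_mat_blocks[OF inc]
  define x where "x = \<omega> - \<omega>b"
  define p where "p = \<Gamma> *\<^sub>v vsin \<eta>"
  define pb where "pb = \<Gamma> *\<^sub>v vsin \<eta>b"
  define y where "y = gen_block B ng *\<^sub>v (p - pb)"
  have \<Gamma>c: "\<Gamma> \<in> carrier_mat m m" using \<Gamma> by (simp add: pos_diag_def)
  have c: "p \<in> carrier_vec m" "pb \<in> carrier_vec m" "\<omega>b \<in> carrier_vec ng" "x \<in> carrier_vec ng"
    "y \<in> carrier_vec ng"
    using \<Gamma>c blocks vecs \<eta> \<eta>b by (auto simp: p_def pb_def \<omega>b ones_vec_def x_def y_def Omega_def vsin_def)
  have BLz: "load_block B ng *\<^sub>v (p - pb) = 0\<^sub>v nl"
    using load blocks c by (simp add: p_def pb_def mult_minus_distrib_mat_vec)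
  have S: "B_S B ng \<Gamma> \<eta> \<in> carrier_mat ng m" by (rule B_S_carrier[OF inc conn ng \<Gamma> \<eta>])
  have "(p - pb) \<bullet> (transpose_mat (B_S B ng \<Gamma> \<eta>) *\<^sub>v \<omega>)
      = (transpose_mat (B_S B ng \<Gamma> \<eta>) *\<^sub>v \<omega>) \<bullet> (p - pb)"
    using S c vecs by (intro comm_scalar_prod[of _ m]) auto
  also have "\<dots> = \<omega> \<bullet> (B_S B ng \<Gamma> \<eta> *\<^sub>v (p - pb))"
    using S c vecs by (intro transpose_vec_mult_scalar) auto
  also have "B_S B ng \<Gamma> \<eta> *\<^sub>v (p - pb) = y"
    using B_S_mult_vec_load_kernel[OF inc conn ng \<Gamma> \<eta> _ BLz] c by (simp add: y_def)
  finally have flow: "(p - pb) \<bullet> (transpose_mat (B_S B ng \<Gamma> \<eta>) *\<^sub>v \<omega>) = \<omega> \<bullet> y" .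
  have "M *\<^sub>v \<omega>' = - (A *\<^sub>v x) - y + (u - ub)"
  proof (rule eq_vecI)
    fix i assume "i < dim_vec (- (A *\<^sub>v x) - y + (u - ub))"
    then have i: "i < ng" using vecs by simp
    show "(M *\<^sub>v \<omega>') $ i = (- (A *\<^sub>v x) - y + (u - ub)) $ i"
      using arg_cong[OF dyn, of "\<lambda>v. v $ i"] arg_cong[OF eq, of "\<lambda>v. v $ i"] i A blocks c vecs
      by (simp add: x_def y_def p_def pb_def mult_minus_distrib_mat_vec)
  qed (use dyn A vecs c in simp)
  then have "x \<bullet> (M *\<^sub>v \<omega>') = - (x \<bullet> (A *\<^sub>v x)) - x \<bullet> y + x \<bullet> (u - ub)"
    using A c vecs by (simp add: scalar_prod_add_distrib[of _ ng] scalar_prod_minus_distrib[of _ ng])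
  moreover have "\<omega> \<bullet> y - x \<bullet> y = \<omega>0 * (ones_vec ng \<bullet> y)"
    using c vecs by (simp add: x_def minus_scalar_prod_distrib[of _ ng] \<omega>b)
  moreover have "ones_vec ng \<bullet> y = 0"
    unfolding y_def by (rule ones_scalar_prod_gen_block[OF inc _ BLz]) (use c in simp)
  ultimately show ?thesis
    using flow by (simp add: x_def p_def pb_def)
qed

lemma swing_W_has_real_derivative:
  assumes graph: "incidence_mat B (ng + nl) m" "connected_graph B" "0 < ng"
    and Gam: "pos_diag \<Gamma> m" and Mpd: "pos_diag M ng" and Apd: "pos_diag A ng"
    and ub: "ub \<in> carrier_vec ng" and eta_b: "\<eta>b \<in> Omega m"
    and omega_b: "\<omega>b = \<omega>0 \<cdot>\<^sub>v ones_vec ng"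
    and eq: "0\<^sub>v ng = - (A *\<^sub>v \<omega>b) - gen_block B ng *\<^sub>v (\<Gamma> *\<^sub>v vsin \<eta>b) + ub"
    and I: "\<forall>a\<in>I. \<forall>b\<in>I. {a..b} \<subseteq> I" "0 \<in> I"
    and dyn: "\<And>s. s \<in> I \<Longrightarrow>
               M *\<^sub>v \<omega>d s = - (A *\<^sub>v \<omega> s) - gen_block B ng *\<^sub>v (\<Gamma> *\<^sub>v vsin (\<eta> s)) + u s"
    and \<eta>: "\<And>s. s \<in> I \<Longrightarrow> \<eta> s \<in> Omega m"
    and \<omega>: "\<And>s. s \<in> I \<Longrightarrow> \<omega> s \<in> carrier_vec ng"
    and \<omega>d: "\<And>s. s \<in> I \<Longrightarrow> \<omega>d s \<in> carrier_vec ng"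
    and u: "\<And>s. s \<in> I \<Longrightarrow> u s \<in> carrier_vec ng"
    and d\<eta>: "\<And>s k. s \<in> I \<Longrightarrow> k < m \<Longrightarrow> ((\<lambda>r. \<eta> r $ k) has_real_derivative
               (transpose_mat (B_S B ng \<Gamma> (\<eta> s)) *\<^sub>v \<omega> s) $ k) (at s within I)"
    and d\<omega>: "\<And>s j. s \<in> I \<Longrightarrow> j < ng \<Longrightarrow>
               ((\<lambda>r. \<omega> r $ j) has_real_derivative \<omega>d s $ j) (at s within I)"
    and init: "load_block B ng *\<^sub>v (\<Gamma> *\<^sub>v vsin (\<eta> 0)) = load_block B ng *\<^sub>v (\<Gamma> *\<^sub>v vsin \<eta>b)"
    and t: "t \<in> I"
  shows "((\<lambda>s. W_fun M \<Gamma> \<eta>b \<omega>b (\<eta> s) (\<omega> s)) has_real_derivative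
           - ((\<omega> t - \<omega>b) \<bullet> (A *\<^sub>v (\<omega> t - \<omega>b))) + (\<omega> t - \<omega>b) \<bullet> (u t - ub)) (at t within I)"
proof -
  have \<Gamma>c: "\<Gamma> \<in> carrier_mat m m" "diagonal_mat \<Gamma>" and Mc: "M \<in> carrier_mat ng ng" "diagonal_mat M"
    and Ac: "A \<in> carrier_mat ng ng"
    using Gam Mpd Apd by (auto simp: pos_diag_def)
  have carriers: "\<eta>b \<in> carrier_vec m" "\<omega>b \<in> carrier_vec ng" "\<And>s. s \<in> I \<Longrightarrow> \<eta> s \<in> carrier_vec m"
    using eta_b omega_b \<eta> by (auto simp: Omega_def ones_vec_def)
  have "load_block B ng *\<^sub>v (\<Gamma> *\<^sub>v vsin (\<eta> t)) = load_block B ng *\<^sub>v (\<Gamma> *\<^sub>v vsin \<eta>b)"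
    using load_block_Gamma_vsin_constant[OF graph Gam I(1) \<eta> \<omega> d\<eta> I(2) t] init by simp
  from swing_power_balance[OF graph Gam \<eta>[OF t] carriers(1) Ac \<omega>[OF t] u[OF t] ub dyn[OF t] eq omega_b this]
  show ?thesis
    using W_fun_has_real_derivative[OF \<Gamma>c Mc carriers(1,2) carriers(3) \<omega> t _ \<omega>d[OF t] d\<eta>[OF t] d\<omega>[OF t]]
      B_S_carrier[OF graph Gam \<eta>[OF t]] \<omega>[OF t]
    by simp
qed

theorem proposition5:
  fixes B \<Gamma> M A :: "real mat" and ng nl m :: nat
    and ub \<eta>b \<omega>b :: "real vec" and \<omega>0 :: real
  assumes graph: "incidence_mat B (ng + nl) m" "connected_graph B" "0 < ng"
    and Gam: "pos_diag \<Gamma> m" and Mpd: "pos_diag M ng" and Apd: "pos_diag A ng"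
    and ub: "ub \<in> carrier_vec ng"
    and eta_b: "\<eta>b \<in> Omega m" "\<exists>\<theta> \<in> carrier_vec (ng + nl). \<eta>b = transpose_mat B *\<^sub>v \<theta>"
    and omega_b: "\<omega>b = \<omega>0 \<cdot>\<^sub>v ones_vec ng"
    and eq1: "transpose_mat (B_S B ng \<Gamma> \<eta>b) *\<^sub>v \<omega>b = zero_vec m"
    and eq2: "zero_vec ng = - (A *\<^sub>v \<omega>b) - gen_block B ng *\<^sub>v (\<Gamma> *\<^sub>v vsin \<eta>b) + ub"
  shows "\<exists>\<delta>>0. \<forall>(I :: real set) (\<eta> :: real \<Rightarrow> real vec) (\<omega> :: real \<Rightarrow> real vec)
            (\<omega>d :: real \<Rightarrow> real vec) (u :: real \<Rightarrow> real vec).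
     ((\<forall>a\<in>I. \<forall>b\<in>I. {a..b} \<subseteq> I) \<and> 0 \<in> I \<and>
      (\<forall>t\<in>I. \<eta> t \<in> Omega m \<and> \<omega> t \<in> carrier_vec ng \<and> \<omega>d t \<in> carrier_vec ng \<and>
               u t \<in> carrier_vec ng \<and>
               (\<forall>k<m. ((\<lambda>s. \<eta> s $ k) has_real_derivative
                    (transpose_mat (B_S B ng \<Gamma> (\<eta> t)) *\<^sub>v \<omega> t) $ k) (at t within I)) \<and>
               (\<forall>j<ng. ((\<lambda>s. \<omega> s $ j) has_real_derivative \<omega>d t $ j) (at t within I)) \<and>
               M *\<^sub>v \<omega>d t = - (A *\<^sub>v \<omega> t) - gen_block B ng *\<^sub>v (\<Gamma> *\<^sub>v vsin (\<eta> t)) + u t) \<and>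
      (\<forall>k<m. \<bar>\<eta> 0 $ k - \<eta>b $ k\<bar> < \<delta>) \<and> (\<forall>j<ng. \<bar>\<omega> 0 $ j - \<omega>b $ j\<bar> < \<delta>) \<and>
      load_block B ng *\<^sub>v (\<Gamma> *\<^sub>v vsin (\<eta> 0)) = load_block B ng *\<^sub>v (\<Gamma> *\<^sub>v vsin \<eta>b))
     \<longrightarrow> (\<forall>t\<in>I. ((\<lambda>s. W_fun M \<Gamma> \<eta>b \<omega>b (\<eta> s) (\<omega> s)) has_real_derivative
              (- ((\<omega> t - \<omega>b) \<bullet> (A *\<^sub>v (\<omega> t - \<omega>b))) + (\<omega> t - \<omega>b) \<bullet> (u t - ub)))
              (at t within I))"
proof (intro exI[of _ "1::real"] conjI allI impI ballI)
  show "0 < (1::real)" by simp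
  \<comment> \<open>\<open>dyn\<close> is the first premise of the lemma, so \<open>blast\<close> instantiates \<open>\<omega>d\<close> and \<open>u\<close> from it.\<close>
qed (rule swing_W_has_real_derivative[OF graph Gam Mpd Apd ub eta_b(1) omega_b eq2]; blast)

end
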